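(* Let $n\ge2$ and $(x,y)\in\mathbb{C}^n\times\mathbb{C}^{n-1}$. Then $(x,y)\in\mathbb{G}_{1,n}$ if and only if both of the following hold: (I) the restriction of $\Psi_n(\cdot;x,y)$ to $\overline{\mathbb{D}}$ lies in $\mathcal{O}(\mathbb{D})\cap\mathcal{C}(\overline{\mathbb{D}})$ and $\sup_{z\in\partial\mathbb{D}}|\Psi_n(z;x,y)|<1$; (II) if $\mathscr{R}_n(x,y)=0$, then every common zero of $P_n(\cdot;x)$ and $Q_n(\cdot;y)$ lies outside $\overline{\mathbb{D}}$.
   Context: $\mathbb{D}$ is the open unit disc. $P_n(z;x):=\sum_{j=0}^{n-1}(-1)^jx_{j+1}z^j$, $Q_n(z;y):=1+\sum_{j=1}^{n-1}(-1)^jy_jz^j$. $\mathbb{G}_{1,n}:=\{(x,y)\in\mathbb{C}^n\times\mathbb{C}^{n-1}: \text{the zero set of }(z,w)\mapsto Q_n(z;y)-wP_n(z;x)\text{ does not meet }\overline{\mathbb{D}}^2\}$. $\Psi_n(\cdot;x,y)$ is the rational function $P_n(\cdot;x)/Q_n(\cdot;y)$ with all common linear factors of numerator and denominator cancelled. $\mathscr{R}_n(x,y)$ is the resultant of the univariate polynomials $P_n(\cdot;x)$ and $Q_n(\cdot;y)$. *)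

theory Defs
  imports "HOL-Analysis.Analysis" "HOL-Computational_Algebra.Computational_Algebra" "HOL-Computational_Algebra.Field_as_Ring" "Subresultants.Resultant_Prelim"
begin

text \<open>Vectors x in C^n and y in C^(n-1) are represented as functions nat => complex;
  only x 1, ..., x n and y 1, ..., y (n-1) are ever used.\<close>

definition Pn :: "nat \<Rightarrow> (nat \<Rightarrow> complex) \<Rightarrow> complex poly" where
  "Pn n x = (\<Sum>j<n. monom ((-1) ^ j * x (j + 1)) j)"

definition Qn :: "nat \<Rightarrow> (nat \<Rightarrow> complex) \<Rightarrow> complex poly" where
  "Qn n y = 1 + (\<Sum>j\<in>{1..<n}. monom ((-1) ^ j * y j) j)"

definition G1n :: "nat \<Rightarrow> ((nat \<Rightarrow> complex) \<times> (nat \<Rightarrow> complex)) set" where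
  "G1n n = {(x, y). \<forall>z w. cmod z \<le> 1 \<longrightarrow> cmod w \<le> 1 \<longrightarrow>
                     poly (Qn n y) z - w * poly (Pn n x) z \<noteq> 0}"

text \<open>Isabelle's convention a/0 = 0 is used at poles; since numerator and denominator
  are coprime, the function fails to be continuous at any pole.\<close>

definition Psin :: "nat \<Rightarrow> (nat \<Rightarrow> complex) \<Rightarrow> (nat \<Rightarrow> complex) \<Rightarrow> complex \<Rightarrow> complex" where
  "Psin n x y z = (let g = gcd (Pn n x) (Qn n y)
                   in poly (Pn n x div g) z / poly (Qn n y div g) z)"

definition Rn :: "nat \<Rightarrow> (nat \<Rightarrow> complex) \<Rightarrow> (nat \<Rightarrow> complex) \<Rightarrow> complex" where
  "Rn n x y = resultant (Pn n x) (Qn n y)"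

end

theory Submission
  imports Defs "HOL-Complex_Analysis.Conformal_Mappings" "Subresultants.Subresultant_Gcd"
begin

(* Write P = P_n(.;x), Q = Q_n(.;y), g = gcd P Q, P = p g, Q = q g, so that Psi_n = p/q with
   p, q coprime.  Solving Q(z) - w P(z) = 0 for w shows that (x,y) lies in G_{1,n} iff
   |P| < |Q| on the closed disc.  Forward direction: then Q, hence q and g, have no zeros on the
   closed disc, Psi_n = P/Q there, and |Psi_n| < 1 on the compact circle forces the supremum
   below 1.  Backward direction: continuity of the reduced quotient p/q (with the convention
   a/0 = 0) on the closed disc forces q to have no zeros there; by the maximum modulus principle
   |Psi_n| < 1 on the closed disc; at points where g vanishes, P and Q have a common zero, so
   deg g > 0, i.e. the resultant vanishes (library fact resultant_0_gcd), and (II) excludes such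
   points from the closed disc. *)

lemma no_small_solution_iff_norm_less:
  fixes P Q :: "'a::real_normed_field"
  shows "(\<forall>w. norm w \<le> 1 \<longrightarrow> Q - w * P \<noteq> 0) \<longleftrightarrow> norm P < norm Q"
proof
  assume no_solution: "\<forall>w. norm w \<le> 1 \<longrightarrow> Q - w * P \<noteq> 0"
  show "norm P < norm Q"
  proof (rule ccontr)
    assume "\<not> norm P < norm Q"
    then have "norm (Q / P) \<le> 1" and "Q - (Q / P) * P = 0"
      by (auto simp: norm_divide divide_le_eq_1)
    with no_solution show False by blast
  qed
next
  assume less: "norm P < norm Q"
  show "\<forall>w. norm w \<le> 1 \<longrightarrow> Q - w * P \<noteq> 0"
  proof (intro allI impI notI)
    fix w :: 'a
    assume "norm w \<le> 1" and "Q - w * P = 0"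
    then have "norm Q \<le> norm P"
      by (simp add: norm_mult mult_left_le_one_le)
    with less show False by simp
  qed
qed

lemma G1n_iff_dominated:
  "(x, y) \<in> G1n n \<longleftrightarrow> (\<forall>z\<in>cball 0 1. cmod (poly (Pn n x) z) < cmod (poly (Qn n y) z))"
  unfolding G1n_def mem_cball_0 no_small_solution_iff_norm_less[symmetric] by auto

lemma poly_Qn_0: "poly (Qn n y) 0 = 1"
  by (simp add: Qn_def poly_sum poly_monom)

lemma Psin_reduced_fraction:
  obtains p q g where "Pn n x = p * g" and "Qn n y = q * g" and "coprime p q"
    and "Psin n x y = (\<lambda>z. poly p z / poly q z)" and "Rn n x y = 0 \<longleftrightarrow> degree g \<noteq> 0"
proof
  define g where "g = gcd (Pn n x) (Qn n y)"
  have "Qn n y \<noteq> 0"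
    using poly_Qn_0[of n y] by auto
  then show "coprime (Pn n x div g) (Qn n y div g)"
    unfolding g_def by (intro div_gcd_coprime) simp
  show "Pn n x = Pn n x div g * g" and "Qn n y = Qn n y div g * g"
    by (simp_all add: g_def)
  show "Psin n x y = (\<lambda>z. poly (Pn n x div g) z / poly (Qn n y div g) z)"
    by (simp add: Psin_def g_def Let_def fun_eq_iff)
  show "Rn n x y = 0 \<longleftrightarrow> degree g \<noteq> 0"
    unfolding Rn_def g_def by (rule resultant_0_gcd)
qed

text \<open>Coprime polynomials over a field share no root: a common root \<open>z\<close> would give the common
  non-unit divisor \<open>X - z\<close>.\<close>

lemma coprime_no_common_root:
  fixes p q :: "'a::field poly"
  assumes "coprime p q" and "poly p z = 0" and "poly q z = 0"
  shows False
proof -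
  have "[:-z, 1:] dvd p" and "[:-z, 1:] dvd q"
    using assms(2,3) by (simp_all add: poly_eq_0_iff_dvd)
  with assms(1) have "is_unit [:-z, 1:]"
    by (rule coprime_common_divisor)
  then show False
    by (simp add: is_unit_iff_degree)
qed

text \<open>A reduced fraction \<open>p/q\<close> (evaluated with the convention \<open>a/0 = 0\<close>) that is continuous on
  a set \<open>S\<close> has no pole at any limit point of \<open>S\<close> belonging to \<open>S\<close>: away from the finitely many
  zeros of \<open>q\<close> one has \<open>(p/q) q = p\<close>, and by continuity this identity persists at \<open>z\<close>, so a zero
  of \<open>q\<close> at \<open>z\<close> would also be a zero of \<open>p\<close>.\<close>

lemma continuous_reduced_fraction_no_pole:
  fixes p q :: "'a::real_normed_field poly"
  assumes "coprime p q" and "q \<noteq> 0"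
    and cont: "continuous_on S (\<lambda>w. poly p w / poly q w)"
    and "z \<in> S" and "z islimpt S"
  shows "poly q z \<noteq> 0"
proof
  assume q_z: "poly q z = 0"
  define R where "R = {w. poly q w = 0}"
  define h where "h = (\<lambda>w. poly p w / poly q w * poly q w)"
  have "finite R"
    unfolding R_def using \<open>q \<noteq> 0\<close> by (rule poly_roots_finite)
  then have limpt: "z islimpt S - R"
    using \<open>z islimpt S\<close> islimpt_finite[of R z] islimpt_Un[of z "S - R" R]
    by (metis Un_Diff_cancel2 islimpt_subset sup_ge1)
  have "continuous_on S h"
    unfolding h_def by (intro continuous_intros cont)
  then have lim_h: "(h \<longlongrightarrow> h z) (at z within S - R)"
    using \<open>z \<in> S\<close> by (meson Diff_subset continuous_on_def tendsto_within_subset)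
  have lim_p: "(h \<longlongrightarrow> poly p z) (at z within S - R)"
  proof (rule Lim_transform_eventually)
    show "(poly p \<longlongrightarrow> poly p z) (at z within S - R)"
      by (intro tendsto_intros)
    show "\<forall>\<^sub>F w in at z within S - R. poly p w = h w"
      by (auto simp: eventually_at_filter h_def R_def)
  qed
  have "h z = poly p z"
    using tendsto_unique[OF _ lim_h lim_p] limpt by (simp add: trivial_limit_within)
  then have "poly p z = 0"
    by (simp add: h_def q_z)
  with assms(1) q_z show False
    by (blast intro: coprime_no_common_root)
qed

text \<open>On a nonempty compact set a strict pointwise bound on a continuous function passes to its
  supremum, since the supremum is attained.\<close>

lemma SUP_norm_less_on_compact:
  fixes f :: "'a::topological_space \<Rightarrow> 'b::real_normed_vector"
  assumes "compact S" and "S \<noteq> {}" and "continuous_on S f"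
    and less: "\<And>w. w \<in> S \<Longrightarrow> norm (f w) < c"
  shows "(SUP w\<in>S. norm (f w)) < c"
proof -
  obtain w0 where "w0 \<in> S" and max: "\<And>w. w \<in> S \<Longrightarrow> norm (f w) \<le> norm (f w0)"
    using continuous_attains_sup[OF assms(1,2) continuous_on_norm[OF assms(3)]] by blast
  have "(SUP w\<in>S. norm (f w)) \<le> norm (f w0)"
    using assms(2) max by (intro cSUP_least) auto
  with less[OF \<open>w0 \<in> S\<close>] show ?thesis
    by linarith
qed

lemma norm_le_SUP_sphere:
  fixes f :: "complex \<Rightarrow> complex"
  assumes "f holomorphic_on ball a r" and "continuous_on (cball a r) f" and "z \<in> cball a r"
  shows "norm (f z) \<le> (SUP w\<in>sphere a r. norm (f w))"
proof -
  have "compact ((\<lambda>w. norm (f w)) ` sphere a r)"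
    using assms(2) by (intro compact_continuous_image continuous_intros)
      (auto intro: continuous_on_subset)
  then have "bdd_above ((\<lambda>w. norm (f w)) ` sphere a r)"
    by (intro bounded_imp_bdd_above compact_imp_bounded)
  then have boundary: "norm (f w) \<le> (SUP w\<in>sphere a r. norm (f w))"
    if "w \<in> frontier (cball a r)" for w
    using that by (intro cSUP_upper) auto
  show ?thesis
    by (rule maximum_modulus_frontier[of f "cball a r", OF _ _ _ boundary]) (use assms in auto)
qed

lemma reduced_fraction_bounded_if_dominated:
  fixes P Q p q g :: "complex poly"
  assumes P: "P = p * g" and Q: "Q = q * g"
    and dominated: "\<forall>z\<in>cball 0 1. cmod (poly P z) < cmod (poly Q z)"
  shows "(\<lambda>z. poly p z / poly q z) holomorphic_on ball 0 1 \<and>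
         continuous_on (cball 0 1) (\<lambda>z. poly p z / poly q z) \<and>
         (SUP z\<in>sphere 0 1. cmod (poly p z / poly q z)) < 1"
proof (intro conjI)
  have no_zero: "poly q z \<noteq> 0" "poly g z \<noteq> 0" if "z \<in> cball 0 1" for z
    using dominated that Q by fastforce+
  show "(\<lambda>z. poly p z / poly q z) holomorphic_on ball 0 1"
    using no_zero by (intro holomorphic_intros) auto
  show cont: "continuous_on (cball 0 1) (\<lambda>z. poly p z / poly q z)"
    using no_zero by (intro continuous_intros) auto
  show "(SUP z\<in>sphere 0 1. cmod (poly p z / poly q z)) < 1"
  proof (rule SUP_norm_less_on_compact)
    show "continuous_on (sphere 0 1) (\<lambda>z. poly p z / poly q z)"
      using cont by (rule continuous_on_subset) auto
    fix w :: complex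
    assume "w \<in> sphere 0 1"
    then have w: "w \<in> cball 0 1"
      by simp
    then have "poly p w / poly q w = poly P w / poly Q w"
      using no_zero[OF w] by (simp add: P Q)
    with dominated w show "cmod (poly p w / poly q w) < 1"
      by (simp add: norm_divide divide_less_eq_1)
  qed auto
qed

lemma dominated_if_reduced_fraction_bounded:
  fixes P Q p q g :: "complex poly"
  assumes P: "P = p * g" and Q: "Q = q * g" and "Q \<noteq> 0" and "coprime p q"
    and hol: "(\<lambda>z. poly p z / poly q z) holomorphic_on ball 0 1"
    and cont: "continuous_on (cball 0 1) (\<lambda>z. poly p z / poly q z)"
    and sup: "(SUP z\<in>sphere 0 1. cmod (poly p z / poly q z)) < 1"
    and common_zeros: "degree g \<noteq> 0 \<longrightarrow> (\<forall>z. poly P z = 0 \<and> poly Q z = 0 \<longrightarrow> z \<notin> cball 0 1)"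
  shows "\<forall>z\<in>cball 0 1. cmod (poly P z) < cmod (poly Q z)"
proof
  fix z :: complex
  assume z: "z \<in> cball 0 1"
  have "q \<noteq> 0" and "g \<noteq> 0"
    using \<open>Q \<noteq> 0\<close> Q by auto
  have "z islimpt cball 0 1"
    using z islimpt_ball[of z 0 1] by (auto intro: islimpt_subset)
  with \<open>coprime p q\<close> \<open>q \<noteq> 0\<close> cont z have q_z: "poly q z \<noteq> 0"
    by (rule continuous_reduced_fraction_no_pole)
  have g_z: "poly g z \<noteq> 0"
  proof
    assume "poly g z = 0"
    with \<open>g \<noteq> 0\<close> have "degree g \<noteq> 0"
      by (metis degree_eq_zeroE poly_const_conv pCons_0_0)
    with common_zeros z \<open>poly g z = 0\<close> show False
      by (simp add: P Q)
  qed
  have "cmod (poly p z / poly q z) < 1"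
    using norm_le_SUP_sphere[OF hol cont z] sup by linarith
  then show "cmod (poly P z) < cmod (poly Q z)"
    using q_z g_z by (simp add: P Q norm_mult norm_divide divide_less_eq_1)
qed

theorem theorem3p2:
  fixes n :: nat and x y :: "nat \<Rightarrow> complex"
  assumes "n \<ge> 2"
  shows "(x, y) \<in> G1n n \<longleftrightarrow>
         ((Psin n x y holomorphic_on ball 0 1 \<and> continuous_on (cball 0 1) (Psin n x y) \<and>
           (SUP z\<in>sphere 0 1. cmod (Psin n x y z)) < 1) \<and>
          (Rn n x y = 0 \<longrightarrow>
             (\<forall>z. poly (Pn n x) z = 0 \<and> poly (Qn n y) z = 0 \<longrightarrow> z \<notin> cball 0 1)))"
proof -
  obtain p q g where P: "Pn n x = p * g" and Q: "Qn n y = q * g" and "coprime p q"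
    and Psi: "Psin n x y = (\<lambda>z. poly p z / poly q z)" and R: "Rn n x y = 0 \<longleftrightarrow> degree g \<noteq> 0"
    by (rule Psin_reduced_fraction)
  have "Qn n y \<noteq> 0"
    using poly_Qn_0[of n y] by auto
  have no_common_zero_if_dominated:
    "\<forall>z. poly (Pn n x) z = 0 \<and> poly (Qn n y) z = 0 \<longrightarrow> z \<notin> cball 0 1"
    if "\<forall>z\<in>cball 0 1. cmod (poly (Pn n x) z) < cmod (poly (Qn n y) z)"
    using that by force
  show ?thesis
    unfolding G1n_iff_dominated Psi R
    using reduced_fraction_bounded_if_dominated[OF P Q] no_common_zero_if_dominated
      dominated_if_reduced_fraction_bounded[OF P Q \<open>Qn n y \<noteq> 0\<close> \<open>coprime p q\<close>]
    by blast
qed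

end
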